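(* Let $D$ be a directed graph (quiver) with vertex set $I$, $A=kD$ its path algebra, and let $r$ be any of $r_b,r_k,r_l,r_j$. Let $s,t\in I$ with $A_{st}\neq 0$. Then (i) $r(A_{st})=0$ if and only if $A_{ts}\neq 0$; (ii) $r(A_{st})=A_{st}$ if and only if $A_{ts}=0$.
   Context: $D$ may be infinite and may have multiple arrows and loops; $k$ is a field. The path algebra $A=kD=\bigoplus_{i,j\in I}A_{ij}$, where $A_{ij}$ is the $k$-span of all paths from $i$ to $j$ of length $\ge1$, together with the trivial path $e_{ii}$ when $i=j$; multiplication is concatenation (a path from $i$ to $j$ times a path from $j$ to $l$ is the concatenated path from $i$ to $l$, other products zero, $e_{ii}$ acting as identity on paths starting/ending at $i$). Thus $A_{ij}\neq 0$ iff there is a path from $i$ to $j$. $A$ is a generalized matrix algebra, and $A_{st}$ is regarded as a $\Gamma$-ring with $\Gamma=A_{ts}$ (ternary product via path multiplication); $r(A_{st})$ is its radical as a $\Gamma$-ring: $r_b$ Baer (prime) radical, $r_k$ nil radical, $r_l$ Levitzki radical, $r_j$ Jacobson radical (in the sense of Coppage–Luh), where e.g. $y\in A_{st}$ is right quasi-regular if for each $x\in A_{ts}$ there is $u\in A_{ts}A_{st}$ with $yxu+yx+u$... (standard Coppage–Luh definition). *)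

theory Defs
  imports Main "HOL-Library.Function_Algebras"
begin

text \<open>All Gamma-rings considered here live inside an ambient additive group 'a
equipped with an (associative) multiplication mul.\<close>

definition gtp :: "('a \<Rightarrow> 'a \<Rightarrow> 'a) \<Rightarrow> 'a \<Rightarrow> 'a \<Rightarrow> 'a \<Rightarrow> 'a" where
  "gtp mul x g y = mul (mul x g) y"

definition gideal :: "('a::ab_group_add \<Rightarrow> 'a \<Rightarrow> 'a) \<Rightarrow> 'a set \<Rightarrow> 'a set \<Rightarrow> 'a set \<Rightarrow> bool" where
  "gideal mul M G I \<longleftrightarrow> I \<subseteq> M \<and> 0 \<in> I \<and> (\<forall>a\<in>I. \<forall>b\<in>I. a - b \<in> I) \<and>
     (\<forall>x\<in>M. \<forall>g\<in>G. \<forall>a\<in>I. gtp mul x g a \<in> I \<and> gtp mul a g x \<in> I)"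

definition gprime_ideal :: "('a::ab_group_add \<Rightarrow> 'a \<Rightarrow> 'a) \<Rightarrow> 'a set \<Rightarrow> 'a set \<Rightarrow> 'a set \<Rightarrow> bool" where
  "gprime_ideal mul M G P \<longleftrightarrow> gideal mul M G P \<and> P \<noteq> M \<and>
     (\<forall>U V. gideal mul M G U \<and> gideal mul M G V \<and>
        (\<forall>u\<in>U. \<forall>g\<in>G. \<forall>v\<in>V. gtp mul u g v \<in> P) \<longrightarrow> U \<subseteq> P \<or> V \<subseteq> P)"

text \<open>Baer (prime) radical: intersection of all prime ideals (M if there are none).\<close>
definition baer_radical :: "('a::ab_group_add \<Rightarrow> 'a \<Rightarrow> 'a) \<Rightarrow> 'a set \<Rightarrow> 'a set \<Rightarrow> 'a set" where
  "baer_radical mul M G = {x \<in> M. \<forall>P. gprime_ideal mul M G P \<longrightarrow> x \<in> P}"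

definition ideal_sum :: "('a::ab_group_add \<Rightarrow> 'a \<Rightarrow> 'a) \<Rightarrow> 'a set \<Rightarrow> 'a set \<Rightarrow> ('a set \<Rightarrow> bool) \<Rightarrow> 'a set" where
  "ideal_sum mul M G Q = \<Inter>{J. gideal mul M G J \<and> \<Union>{I. gideal mul M G I \<and> Q I} \<subseteq> J}"

fun gpow :: "('a \<Rightarrow> 'a \<Rightarrow> 'a) \<Rightarrow> 'a \<Rightarrow> 'a \<Rightarrow> nat \<Rightarrow> 'a" where
  "gpow mul x g 0 = x"
| "gpow mul x g (Suc n) = gtp mul x g (gpow mul x g n)"

definition gnilpotent_elem :: "('a::ab_group_add \<Rightarrow> 'a \<Rightarrow> 'a) \<Rightarrow> 'a set \<Rightarrow> 'a \<Rightarrow> bool" where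
  "gnilpotent_elem mul G x \<longleftrightarrow> (\<forall>g\<in>G. \<exists>n. gpow mul x g n = 0)"

definition nil_radical :: "('a::ab_group_add \<Rightarrow> 'a \<Rightarrow> 'a) \<Rightarrow> 'a set \<Rightarrow> 'a set \<Rightarrow> 'a set" where
  "nil_radical mul M G = ideal_sum mul M G (\<lambda>I. \<forall>x\<in>I. gnilpotent_elem mul G x)"

fun gprods :: "('a \<Rightarrow> 'a \<Rightarrow> 'a) \<Rightarrow> 'a set \<Rightarrow> 'a set \<Rightarrow> nat \<Rightarrow> 'a set" where
  "gprods mul G F 0 = F"
| "gprods mul G F (Suc n) = {gtp mul f g p | f g p. f \<in> F \<and> g \<in> G \<and> p \<in> gprods mul G F n}"

definition glocally_nilpotent :: "('a::ab_group_add \<Rightarrow> 'a \<Rightarrow> 'a) \<Rightarrow> 'a set \<Rightarrow> 'a set \<Rightarrow> bool" where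
  "glocally_nilpotent mul G S \<longleftrightarrow> (\<forall>F. finite F \<and> F \<subseteq> S \<longrightarrow> (\<exists>n. gprods mul G F n \<subseteq> {0}))"

definition levitzki_radical :: "('a::ab_group_add \<Rightarrow> 'a \<Rightarrow> 'a) \<Rightarrow> 'a set \<Rightarrow> 'a set \<Rightarrow> 'a set" where
  "levitzki_radical mul M G = ideal_sum mul M G (glocally_nilpotent mul G)"

definition prod_span :: "('a::ab_group_add \<Rightarrow> 'a \<Rightarrow> 'a) \<Rightarrow> 'a set \<Rightarrow> 'a set \<Rightarrow> 'a set" where
  "prod_span mul M G = {sum_list (map (\<lambda>(x, g). mul x g) l) | l. set l \<subseteq> M \<times> G}"

definition grqr :: "('a::ab_group_add \<Rightarrow> 'a \<Rightarrow> 'a) \<Rightarrow> 'a set \<Rightarrow> 'a set \<Rightarrow> 'a \<Rightarrow> bool" where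
  "grqr mul M G y \<longleftrightarrow>
     (\<forall>g\<in>G. \<exists>u\<in>prod_span mul M G. mul (mul y g) u + mul y g + u = 0)"

definition jacobson_radical :: "('a::ab_group_add \<Rightarrow> 'a \<Rightarrow> 'a) \<Rightarrow> 'a set \<Rightarrow> 'a set \<Rightarrow> 'a set" where
  "jacobson_radical mul M G = ideal_sum mul M G (\<lambda>I. \<forall>y\<in>I. grqr mul M G y)"

datatype radkind = Baer | Nil | Levitzki | Jacobson

fun gradical :: "radkind \<Rightarrow> ('a::ab_group_add \<Rightarrow> 'a \<Rightarrow> 'a) \<Rightarrow> 'a set \<Rightarrow> 'a set \<Rightarrow> 'a set" where
  "gradical Baer = baer_radical"
| "gradical Nil = nil_radical"
| "gradical Levitzki = levitzki_radical"
| "gradical Jacobson = jacobson_radical"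

text \<open>A quiver: vertices of type 'v, arrows of type 'e, source/target maps.
A path is (start vertex, list of arrows); the empty list is the trivial path.\<close>

fun chain :: "('e \<Rightarrow> 'v) \<Rightarrow> ('e \<Rightarrow> 'v) \<Rightarrow> 'e list \<Rightarrow> bool" where
  "chain src tgt [] = True"
| "chain src tgt [e] = True"
| "chain src tgt (e # e' # es) = (tgt e = src e' \<and> chain src tgt (e' # es))"

definition pend :: "('e \<Rightarrow> 'v) \<Rightarrow> 'v \<times> 'e list \<Rightarrow> 'v" where
  "pend tgt p = (if snd p = [] then fst p else tgt (last (snd p)))"

definition is_path :: "('e \<Rightarrow> 'v) \<Rightarrow> ('e \<Rightarrow> 'v) \<Rightarrow> 'v \<Rightarrow> 'v \<Rightarrow> 'v \<times> 'e list \<Rightarrow> bool" where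
  "is_path src tgt i j p \<longleftrightarrow> fst p = i \<and> chain src tgt (snd p) \<and>
     (snd p \<noteq> [] \<longrightarrow> src (hd (snd p)) = i) \<and> pend tgt p = j"

text \<open>A_ij: the k-span of paths from i to j (finitely supported coefficient functions).\<close>
definition path_space :: "('e \<Rightarrow> 'v) \<Rightarrow> ('e \<Rightarrow> 'v) \<Rightarrow> 'v \<Rightarrow> 'v \<Rightarrow> ('v \<times> 'e list \<Rightarrow> 'k::field) set" where
  "path_space src tgt i j = {f. finite {p. f p \<noteq> 0} \<and> (\<forall>p. f p \<noteq> 0 \<longrightarrow> is_path src tgt i j p)}"

text \<open>Multiplication in kD: bilinear extension of concatenation (p then q).\<close>
definition pmul :: "('e \<Rightarrow> 'v) \<Rightarrow> ('v \<times> 'e list \<Rightarrow> 'k::field) \<Rightarrow> ('v \<times> 'e list \<Rightarrow> 'k) \<Rightarrow> ('v \<times> 'e list \<Rightarrow> 'k)" where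
  "pmul tgt f g = (\<lambda>w. \<Sum>a\<in>{a. f a \<noteq> 0}. \<Sum>b\<in>{b. g b \<noteq> 0}.
      (if pend tgt a = fst b \<and> (fst a, snd a @ snd b) = w then f a * g b else 0))"

end

(*
  Write M = A_st and G = A_ts.  If G = 0, every ternary product x g y vanishes, so M has no
  prime ideals and every element is nilpotent and quasi-regular: each radical is all of M.
  If there is a path p from t to s, then x p y is nonzero for all nonzero x, y in M, because
  the product of the longest terms of two composable elements of kD cannot cancel.  Hence {0}
  is a prime ideal and no nonzero element is nilpotent.  For the Jacobson radical, let
  z = y p in A_ss for nonzero y.  If z has no constant term (coefficient of the trivial path
  at s), then z u + z + u = 0 first forces u to have none either, and then the longest term
  of z u survives.  Otherwise rescale p so that y p has constant term -1; then the constant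
  term of (y p) u + y p + u is -1.
*)
theory Submission
  imports Defs
begin

section \<open>Gamma-rings\<close>

definition gno_zero_divisors :: "('a::ab_group_add \<Rightarrow> 'a \<Rightarrow> 'a) \<Rightarrow> 'a set \<Rightarrow> 'a \<Rightarrow> bool" where
  "gno_zero_divisors mul M g \<longleftrightarrow> (\<forall>x\<in>M. \<forall>y\<in>M. x \<noteq> 0 \<longrightarrow> y \<noteq> 0 \<longrightarrow> gtp mul x g y \<noteq> 0)"

lemma gideal_zero:
  assumes "0 \<in> M" "\<And>x. mul 0 x = 0" "\<And>x. mul x 0 = 0"
  shows "gideal mul M G {0}"
  using assms unfolding gideal_def gtp_def by simp

lemma ideal_sum_eq_zero:
  assumes "gideal mul M G {0}" and "\<And>I. gideal mul M G I \<Longrightarrow> Q I \<Longrightarrow> I \<subseteq> {0}"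
  shows "ideal_sum mul M G Q = {0}"
proof
  have "\<Union>{I. gideal mul M G I \<and> Q I} \<subseteq> {0}"
    using assms(2) by blast
  then show "ideal_sum mul M G Q \<subseteq> {0}"
    unfolding ideal_sum_def using assms(1) by (intro Inter_lower) simp
  show "{0} \<subseteq> ideal_sum mul M G Q"
    unfolding ideal_sum_def gideal_def by auto
qed

lemma ideal_sum_eq_carrier:
  assumes "gideal mul M G M" and "Q M"
  shows "ideal_sum mul M G Q = M"
proof
  have "\<Union>{I. gideal mul M G I \<and> Q I} \<subseteq> M"
    unfolding gideal_def by blast
  then show "ideal_sum mul M G Q \<subseteq> M"
    unfolding ideal_sum_def using assms(1) by (intro Inter_lower) simp
  show "M \<subseteq> ideal_sum mul M G Q"
    unfolding ideal_sum_def using assms by blast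
qed

lemma gpow_in_gprods: "x \<in> F \<Longrightarrow> g \<in> G \<Longrightarrow> gpow mul x g n \<in> gprods mul G F n"
  by (induction n) auto

lemma gpow_mem:
  assumes "gideal mul M G M" "x \<in> M" "g \<in> G"
  shows "gpow mul x g n \<in> M"
  using assms by (induction n) (auto simp: gideal_def)

lemma gpow_nonzero:
  assumes "gideal mul M G M" "g \<in> G" "gno_zero_divisors mul M g" "x \<in> M" "x \<noteq> 0"
  shows "gpow mul x g n \<noteq> 0"
proof (induction n)
  case (Suc n)
  then show ?case
    using assms gpow_mem[OF assms(1,4,2)] by (simp add: gno_zero_divisors_def)
qed (use assms in simp)

lemma baer_radical_eq_zero:
  assumes "gideal mul M G {0}" "g \<in> G" "gno_zero_divisors mul M g"
  shows "baer_radical mul M G = {0}"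
proof
  have "0 \<in> M" "\<And>P. gprime_ideal mul M G P \<Longrightarrow> 0 \<in> P"
    using assms(1) unfolding gprime_ideal_def gideal_def by auto
  then show "{0} \<subseteq> baer_radical mul M G"
    unfolding baer_radical_def by blast
  have "gprime_ideal mul M G {0}" if "M \<noteq> {0}"
    unfolding gprime_ideal_def
  proof (intro conjI assms(1) allI impI)
    fix U V
    assume UV: "gideal mul M G U \<and> gideal mul M G V \<and> (\<forall>u\<in>U. \<forall>g\<in>G. \<forall>v\<in>V. gtp mul u g v \<in> {0})"
    then have "U \<subseteq> M" "V \<subseteq> M"
      unfolding gideal_def by auto
    then show "U \<subseteq> {0} \<or> V \<subseteq> {0}"
      using UV assms(2,3) unfolding gno_zero_divisors_def by blast
  qed (use that in auto)
  then show "baer_radical mul M G \<subseteq> {0}"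
    unfolding baer_radical_def by blast
qed

lemma nil_radical_eq_zero:
  assumes "gideal mul M G M" "gideal mul M G {0}" "g \<in> G" "gno_zero_divisors mul M g"
  shows "nil_radical mul M G = {0}"
  unfolding nil_radical_def
proof (rule ideal_sum_eq_zero[OF assms(2)])
  fix I
  assume "gideal mul M G I" "\<forall>x\<in>I. gnilpotent_elem mul G x"
  then show "I \<subseteq> {0}"
    using gpow_nonzero[OF assms(1,3,4)] assms(3)
    unfolding gideal_def gnilpotent_elem_def by blast
qed

lemma levitzki_radical_eq_zero:
  assumes "gideal mul M G M" "gideal mul M G {0}" "g \<in> G" "gno_zero_divisors mul M g"
  shows "levitzki_radical mul M G = {0}"
  unfolding levitzki_radical_def
proof (rule ideal_sum_eq_zero[OF assms(2)])
  fix I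
  assume I: "gideal mul M G I" "glocally_nilpotent mul G I"
  show "I \<subseteq> {0}"
  proof
    fix x
    assume "x \<in> I"
    then obtain n where "gprods mul G {x} n \<subseteq> {0}"
      using I(2) unfolding glocally_nilpotent_def by blast
    then have "gpow mul x g n = 0"
      using gpow_in_gprods[of x "{x}" g G mul n] assms(3) by auto
    then show "x \<in> {0}"
      using gpow_nonzero[OF assms(1,3,4)] I(1) \<open>x \<in> I\<close> unfolding gideal_def by blast
  qed
qed

lemma gradical_eq_carrier_if_products_vanish:
  assumes M: "gideal mul M G M"
    and vanish: "\<And>x g. x \<in> M \<Longrightarrow> g \<in> G \<Longrightarrow> mul x g = 0" and "\<And>y. mul 0 y = 0"
  shows "gradical r mul M G = M"
proof -
  have gtp0: "gtp mul x g y = 0" if "x \<in> M" "g \<in> G" for x g y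
    using that assms by (simp add: gtp_def)
  show ?thesis
  proof (cases r)
    case Baer
    have "\<not> gprime_ideal mul M G P" for P
    proof
      assume P: "gprime_ideal mul M G P"
      then have "0 \<in> P" "P \<subseteq> M" "P \<noteq> M"
        unfolding gprime_ideal_def gideal_def by auto
      have "\<forall>u\<in>M. \<forall>g\<in>G. \<forall>v\<in>M. gtp mul u g v \<in> P"
        using gtp0 \<open>0 \<in> P\<close> by simp
      then have "M \<subseteq> P"
        using P M unfolding gprime_ideal_def by blast
      with \<open>P \<subseteq> M\<close> \<open>P \<noteq> M\<close> show False
        by blast
    qed
    then show ?thesis using Baer by (simp add: baer_radical_def)
  next
    case Nil
    have "gnilpotent_elem mul G x" if "x \<in> M" for x
      unfolding gnilpotent_elem_def using that gtp0 by (auto intro!: exI[of _ "Suc 0"])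
    then show ?thesis using Nil M by (simp add: nil_radical_def ideal_sum_eq_carrier)
  next
    case Levitzki
    have "glocally_nilpotent mul G M"
      unfolding glocally_nilpotent_def using gtp0 by (auto 0 4 intro!: exI[of _ "Suc 0"])
    then show ?thesis using Levitzki M by (simp add: levitzki_radical_def ideal_sum_eq_carrier)
  next
    case Jacobson
    have "0 \<in> prod_span mul M G"
      unfolding prod_span_def by (auto intro!: exI[of _ "[]"])
    then have "grqr mul M G y" if "y \<in> M" for y
      unfolding grqr_def using that assms by (auto intro!: bexI[of _ 0])
    then show ?thesis using Jacobson M by (simp add: jacobson_radical_def ideal_sum_eq_carrier)
  qed
qed

section \<open>Path spaces of a quiver\<close>

lemma pmul_zero_left [simp]: "pmul tgt 0 h = 0"
  unfolding pmul_def by (simp add: zero_fun_def)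

lemma pmul_zero_right [simp]: "pmul tgt f 0 = 0"
  unfolding pmul_def by (simp add: zero_fun_def)

lemma path_space_finite_support: "f \<in> path_space src tgt i j \<Longrightarrow> finite {p. f p \<noteq> 0}"
  unfolding path_space_def by auto

lemma path_space_support_is_path: "f \<in> path_space src tgt i j \<Longrightarrow> f p \<noteq> 0 \<Longrightarrow> is_path src tgt i j p"
  unfolding path_space_def by blast

lemma zero_in_path_space [simp]: "0 \<in> path_space src tgt i j"
  unfolding path_space_def by simp

lemma path_space_add:
  assumes "f \<in> path_space src tgt i j" "h \<in> path_space src tgt i j"
  shows "f + h \<in> path_space src tgt i j"
proof -
  have "{p. (f + h) p \<noteq> 0} \<subseteq> {p. f p \<noteq> 0} \<union> {p. h p \<noteq> 0}"
    by auto
  then show ?thesis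
    using assms unfolding path_space_def by (auto intro: finite_subset)
qed

lemma path_space_diff:
  assumes "f \<in> path_space src tgt i j" "h \<in> path_space src tgt i j"
  shows "f - h \<in> path_space src tgt i j"
proof -
  have "{p. (f - h) p \<noteq> 0} \<subseteq> {p. f p \<noteq> 0} \<union> {p. h p \<noteq> 0}"
    by auto
  then show ?thesis
    using assms unfolding path_space_def by (auto intro: finite_subset)
qed

lemma path_space_scale:
  assumes "f \<in> path_space src tgt i j"
  shows "(\<lambda>w. c * f w) \<in> path_space src tgt i j"
proof -
  have "{p. c * f p \<noteq> 0} \<subseteq> {p. f p \<noteq> 0}"
    by auto
  then show ?thesis
    using assms unfolding path_space_def by (auto intro: finite_subset)
qed

lemma chain_append:
  "chain src tgt la \<Longrightarrow> chain src tgt lb \<Longrightarrow>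
   (la \<noteq> [] \<Longrightarrow> lb \<noteq> [] \<Longrightarrow> tgt (last la) = src (hd lb)) \<Longrightarrow> chain src tgt (la @ lb)"
proof (induction src tgt la rule: chain.induct)
  case (2 src tgt e)
  then show ?case by (cases lb) auto
qed auto

lemma is_path_append:
  assumes "is_path src tgt i j a" "is_path src tgt j l b"
  shows "is_path src tgt i l (fst a, snd a @ snd b)"
proof -
  have a_last: "snd a \<noteq> [] \<Longrightarrow> tgt (last (snd a)) = j" and a_triv: "snd a = [] \<Longrightarrow> i = j"
    using assms(1) by (auto simp: is_path_def pend_def)
  have b_hd: "snd b \<noteq> [] \<Longrightarrow> src (hd (snd b)) = j" and b_triv: "snd b = [] \<Longrightarrow> j = l"
    using assms(2) by (auto simp: is_path_def pend_def)
  have "chain src tgt (snd a @ snd b)"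
    using assms by (intro chain_append) (auto simp: is_path_def a_last b_hd)
  moreover have "snd a @ snd b \<noteq> [] \<Longrightarrow> src (hd (snd a @ snd b)) = i"
    using assms a_triv by (cases "snd a") (auto simp: is_path_def)
  moreover have "pend tgt (fst a, snd a @ snd b) = l"
    using assms b_triv by (cases "snd b = []") (auto simp: is_path_def pend_def)
  ultimately show ?thesis
    using assms(1) by (simp add: is_path_def)
qed

lemma pmul_support:
  assumes "pmul tgt f h w \<noteq> 0"
  obtains a b where "f a \<noteq> 0" "h b \<noteq> 0" "pend tgt a = fst b" "w = (fst a, snd a @ snd b)"
proof (rule ccontr)
  assume "\<not> thesis"
  with that have "pmul tgt f h w = 0"
    unfolding pmul_def by (intro sum.neutral ballI) auto
  with assms show False by simp
qed

lemma path_space_mul: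
  assumes "f \<in> path_space src tgt i j" "h \<in> path_space src tgt j l"
  shows "pmul tgt f h \<in> path_space src tgt i l"
proof -
  have "{w. pmul tgt f h w \<noteq> 0} \<subseteq> (\<lambda>(a, b). (fst a, snd a @ snd b)) ` ({a. f a \<noteq> 0} \<times> {b. h b \<noteq> 0})"
    by (auto elim!: pmul_support)
  moreover have "finite ({a. f a \<noteq> 0} \<times> {b. h b \<noteq> 0})"
    using assms by (auto dest: path_space_finite_support)
  ultimately have "finite {w. pmul tgt f h w \<noteq> 0}"
    by (auto intro: finite_subset)
  moreover have "is_path src tgt i l w" if "pmul tgt f h w \<noteq> 0" for w
    using that assms
    by (auto elim!: pmul_support intro: is_path_append dest: path_space_support_is_path)
  ultimately show ?thesis
    unfolding path_space_def by auto
qed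

lemma pmul_scale_right:
  assumes "c \<noteq> 0"
  shows "pmul tgt f (\<lambda>w. c * h w) = (\<lambda>w. c * pmul tgt f h w)"
  using assms unfolding pmul_def by (auto simp: sum_distrib_left mult.left_commute intro!: sum.cong)

lemma pmul_apply_unique:
  assumes "finite {a. f a \<noteq> 0}" "finite {b. h b \<noteq> 0}"
    and unique: "\<And>a b. f a \<noteq> 0 \<Longrightarrow> h b \<noteq> 0 \<Longrightarrow>
      pend tgt a = fst b \<and> (fst a, snd a @ snd b) = w \<longleftrightarrow> a = a0 \<and> b = b0"
  shows "pmul tgt f h w = f a0 * h b0"
proof -
  have "pmul tgt f h w = (\<Sum>a\<in>{a. f a \<noteq> 0}. \<Sum>b\<in>{b. h b \<noteq> 0}. if a = a0 \<and> b = b0 then f a * h b else 0)"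
    unfolding pmul_def using unique by (intro sum.cong refl) auto
  also have "\<dots> = (\<Sum>a\<in>{a. f a \<noteq> 0}. if a = a0 then \<Sum>b\<in>{b. h b \<noteq> 0}. if b = b0 then f a * h b else 0 else 0)"
    by (intro sum.cong refl) auto
  also have "\<dots> = f a0 * h b0"
    using assms(1,2) by (simp add: sum.delta)
  finally show ?thesis .
qed

lemma pmul_at_trivial_path:
  assumes "finite {a. f a \<noteq> 0}" "finite {b. h b \<noteq> 0}"
  shows "pmul tgt f h (i, []) = f (i, []) * h (i, [])"
  using assms by (rule pmul_apply_unique) (auto simp: pend_def prod_eq_iff)

definition pdeg :: "('v \<times> 'e list \<Rightarrow> 'k::zero) \<Rightarrow> nat" where
  "pdeg f = Max ((\<lambda>p. length (snd p)) ` {p. f p \<noteq> 0})"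

lemma pdeg_ge: "finite {p. f p \<noteq> 0} \<Longrightarrow> f w \<noteq> 0 \<Longrightarrow> length (snd w) \<le> pdeg f"
  unfolding pdeg_def by (rule Max_ge) auto

lemma pdeg_attained:
  assumes "finite {p. f p \<noteq> 0}" "f \<noteq> 0"
  obtains a where "f a \<noteq> 0" "length (snd a) = pdeg f"
proof -
  have "{p. f p \<noteq> 0} \<noteq> {}"
    using assms(2) by (auto simp: fun_eq_iff)
  then have "pdeg f \<in> (\<lambda>p. length (snd p)) ` {p. f p \<noteq> 0}"
    unfolding pdeg_def using assms(1) by (intro Max_in) auto
  then show ?thesis
    using that by auto
qed

lemma pdeg_pos:
  assumes "f \<in> path_space src tgt i j" "f \<noteq> 0" "f (i, []) = 0"
  shows "pdeg f \<ge> 1"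
proof -
  obtain a where a: "f a \<noteq> 0" "length (snd a) = pdeg f"
    using pdeg_attained[OF path_space_finite_support[OF assms(1)] assms(2)] .
  have "fst a = i"
    using path_space_support_is_path[OF assms(1) a(1)] by (simp add: is_path_def)
  with a assms(3) have "snd a \<noteq> []"
    by (metis prod.collapse)
  with a(2) show ?thesis
    by (cases "snd a") auto
qed

lemma pmul_top_coeff:
  assumes f: "f \<in> path_space src tgt i j" and h: "h \<in> path_space src tgt j l"
    and "f \<noteq> 0" "h \<noteq> 0"
  obtains w where "pmul tgt f h w \<noteq> 0" "length (snd w) = pdeg f + pdeg h"
proof -
  note fin = path_space_finite_support[OF f] path_space_finite_support[OF h]
  note is_path = path_space_support_is_path[OF f] path_space_support_is_path[OF h]
  obtain a0 where a0: "f a0 \<noteq> 0" "length (snd a0) = pdeg f"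
    using pdeg_attained[OF fin(1) \<open>f \<noteq> 0\<close>] .
  obtain b0 where b0: "h b0 \<noteq> 0" "length (snd b0) = pdeg h"
    using pdeg_attained[OF fin(2) \<open>h \<noteq> 0\<close>] .
  define w where "w = (i, snd a0 @ snd b0)"
  have "pend tgt a = fst b \<and> (fst a, snd a @ snd b) = w \<longleftrightarrow> a = a0 \<and> b = b0"
    if ab: "f a \<noteq> 0" "h b \<noteq> 0" for a b
  proof
    assume "pend tgt a = fst b \<and> (fst a, snd a @ snd b) = w"
    then have concat: "snd a @ snd b = snd a0 @ snd b0"
      by (simp add: w_def)
    have "length (snd a) \<le> length (snd a0)" "length (snd b) \<le> length (snd b0)"
      using pdeg_ge[OF fin(1) ab(1)] pdeg_ge[OF fin(2) ab(2)] a0 b0 by auto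
    moreover have "length (snd a) + length (snd b) = length (snd a0) + length (snd b0)"
      using arg_cong[OF concat, of length] by simp
    ultimately have "length (snd a) = length (snd a0)"
      by linarith
    with concat have "snd a = snd a0 \<and> snd b = snd b0"
      by (simp add: append_eq_append_conv)
    moreover have "fst a = fst a0" "fst b = fst b0"
      using is_path(1)[OF ab(1)] is_path(1)[OF a0(1)] is_path(2)[OF ab(2)] is_path(2)[OF b0(1)]
      by (auto simp: is_path_def)
    ultimately show "a = a0 \<and> b = b0"
      by (simp add: prod_eq_iff)
  next
    assume "a = a0 \<and> b = b0"
    then show "pend tgt a = fst b \<and> (fst a, snd a @ snd b) = w"
      using is_path(1)[OF a0(1)] is_path(2)[OF b0(1)] by (auto simp: is_path_def w_def)
  qed
  then have "pmul tgt f h w = f a0 * h b0"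
    using fin by (intro pmul_apply_unique) auto
  then show ?thesis
    using that[of w] a0 b0 by (simp add: w_def)
qed

lemma pmul_nonzero:
  "f \<in> path_space src tgt i j \<Longrightarrow> h \<in> path_space src tgt j l \<Longrightarrow> f \<noteq> 0 \<Longrightarrow> h \<noteq> 0 \<Longrightarrow>
   pmul tgt f h \<noteq> 0"
  by (erule (3) pmul_top_coeff) auto

definition path_basis :: "'v \<times> 'e list \<Rightarrow> 'v \<times> 'e list \<Rightarrow> 'k::zero_neq_one" where
  "path_basis p = (\<lambda>w. if w = p then 1 else 0)"

lemma path_basis_in_path_space:
  "is_path src tgt i j p \<Longrightarrow> (path_basis p :: _ \<Rightarrow> 'k::field) \<in> path_space src tgt i j"
  unfolding path_space_def path_basis_def by simp

lemma path_basis_nonzero: "path_basis p \<noteq> 0"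
proof
  assume "path_basis p = 0"
  then show False
    using fun_cong[of "path_basis p" 0 p] by (simp add: path_basis_def zero_fun_def)
qed

lemma path_space_eq_zero_iff:
  "path_space src tgt i j = ({0} :: (_ \<Rightarrow> 'k::field) set) \<longleftrightarrow> (\<nexists>p. is_path src tgt i j p)"
proof
  assume zero: "path_space src tgt i j = ({0} :: (_ \<Rightarrow> 'k) set)"
  show "\<nexists>p. is_path src tgt i j p"
  proof
    assume "\<exists>p. is_path src tgt i j p"
    then obtain p where "is_path src tgt i j p"
      by blast
    then have "(path_basis p :: _ \<Rightarrow> 'k) \<in> path_space src tgt i j"
      by (rule path_basis_in_path_space)
    with zero path_basis_nonzero show False
      by blast
  qed
next
  assume "\<nexists>p. is_path src tgt i j p"
  then show "path_space src tgt i j = ({0} :: (_ \<Rightarrow> 'k) set)"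
    unfolding path_space_def by auto
qed

section \<open>The Gamma-ring A_st with Gamma = A_ts\<close>

lemma path_space_gideal:
  "gideal (pmul tgt) (path_space src tgt s t) (path_space src tgt t s) (path_space src tgt s t)"
  unfolding gideal_def gtp_def by (auto intro: path_space_diff path_space_mul)

lemma path_space_gideal_zero: "gideal (pmul tgt) (path_space src tgt s t) G {0}"
  by (rule gideal_zero) simp_all

lemma path_space_gno_zero_divisors:
  assumes "is_path src tgt t s p"
  shows "gno_zero_divisors (pmul tgt) (path_space src tgt s t :: (_ \<Rightarrow> 'k::field) set) (path_basis p)"
  unfolding gno_zero_divisors_def gtp_def
proof (intro ballI impI)
  fix x y :: "_ \<Rightarrow> 'k"
  assume x: "x \<in> path_space src tgt s t" "x \<noteq> 0" and y: "y \<in> path_space src tgt s t" "y \<noteq> 0"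
  note p = path_basis_in_path_space[OF assms] path_basis_nonzero
  have "pmul tgt x (path_basis p) \<in> path_space src tgt s s" "pmul tgt x (path_basis p) \<noteq> 0"
    using path_space_mul[OF x(1) p(1)] pmul_nonzero[OF x(1) p(1) x(2) p(2)] .
  then show "pmul tgt (pmul tgt x (path_basis p)) y \<noteq> 0"
    using pmul_nonzero[OF _ y(1) _ y(2)] by blast
qed

lemma prod_span_subset_path_space:
  "prod_span (pmul tgt) (path_space src tgt s t) (path_space src tgt t s) \<subseteq> path_space src tgt s s"
proof -
  have "sum_list (map (\<lambda>(x, g). pmul tgt x g) l) \<in> path_space src tgt s s"
    if "set l \<subseteq> path_space src tgt s t \<times> path_space src tgt t s" for l
    using that by (induction l) (auto intro: path_space_add path_space_mul)
  then show ?thesis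
    unfolding prod_span_def by blast
qed

lemma not_quasi_regular_without_constant_term:
  assumes z: "z \<in> path_space src tgt s s" "z \<noteq> 0" "z (s, []) = 0"
    and u: "u \<in> path_space src tgt s s"
  shows "pmul tgt z u + z + u \<noteq> 0"
proof
  assume eq: "pmul tgt z u + z + u = 0"
  note fin = path_space_finite_support[OF z(1)] path_space_finite_support[OF u]
  have "u \<noteq> 0"
    using eq z(2) by auto
  moreover have "u (s, []) = 0"
    using fun_cong[OF eq, of "(s, [])"] pmul_at_trivial_path[OF fin] z(3) by simp
  ultimately have deg_u: "pdeg u \<ge> 1"
    by (rule pdeg_pos[OF u])
  have deg_z: "pdeg z \<ge> 1"
    by (rule pdeg_pos[OF z])
  obtain w where w: "pmul tgt z u w \<noteq> 0" "length (snd w) = pdeg z + pdeg u"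
    using pmul_top_coeff[OF z(1) u z(2) \<open>u \<noteq> 0\<close>] .
  have "z w = 0"
    using pdeg_ge[OF fin(1), of w] w(2) deg_u by linarith
  moreover have "u w = 0"
    using pdeg_ge[OF fin(2), of w] w(2) deg_z by linarith
  ultimately show False
    using fun_cong[OF eq, of w] w(1) by simp
qed

lemma not_quasi_regular_with_constant_term_minus_one:
  assumes z: "z \<in> path_space src tgt s s" "z (s, []) = -1" and u: "u \<in> path_space src tgt s s"
  shows "pmul tgt z u + z + u \<noteq> 0"
proof
  assume "pmul tgt z u + z + u = 0"
  then have "pmul tgt z u (s, []) + z (s, []) + u (s, []) = 0"
    by (metis plus_fun_apply zero_fun_apply)
  moreover have "pmul tgt z u (s, []) = z (s, []) * u (s, [])"
    by (rule pmul_at_trivial_path[OF path_space_finite_support[OF z(1)] path_space_finite_support[OF u]])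
  ultimately show False
    using z(2) by simp
qed

lemma path_space_not_grqr:
  assumes p: "is_path src tgt t s p"
    and y: "y \<in> path_space src tgt s t" "y \<noteq> 0"
  shows "\<not> grqr (pmul tgt) (path_space src tgt s t) (path_space src tgt t s) y"
proof
  assume qr: "grqr (pmul tgt) (path_space src tgt s t) (path_space src tgt t s) y"
  have no_inverse: "\<exists>u \<in> path_space src tgt s s. pmul tgt (pmul tgt y g) u + pmul tgt y g + u = 0"
    if "g \<in> path_space src tgt t s" for g
    using qr that prod_span_subset_path_space[of tgt src s t] unfolding grqr_def by blast
  note basis = path_basis_in_path_space[OF p] path_basis_nonzero
  define z where "z = pmul tgt y (path_basis p)"
  have z: "z \<in> path_space src tgt s s" "z \<noteq> 0"
    unfolding z_def using path_space_mul[OF y(1) basis(1)] pmul_nonzero[OF y(1) basis(1) y(2) basis(2)] .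
  show False
  proof (cases "z (s, []) = 0")
    case True
    obtain u where "u \<in> path_space src tgt s s" "pmul tgt z u + z + u = 0"
      using no_inverse[OF basis(1)] unfolding z_def by blast
    with not_quasi_regular_without_constant_term[OF z True] show False
      by blast
  next
    case False
    define c where "c = - 1 / z (s, [])"
    have "c \<noteq> 0"
      using False by (simp add: c_def)
    define g where "g = (\<lambda>w. c * path_basis p w)"
    have g: "g \<in> path_space src tgt t s"
      unfolding g_def by (intro path_space_scale basis(1))
    have yg: "pmul tgt y g = (\<lambda>w. c * z w)"
      unfolding g_def z_def using \<open>c \<noteq> 0\<close> by (rule pmul_scale_right)
    obtain u where u: "u \<in> path_space src tgt s s"
      and eq: "pmul tgt (\<lambda>w. c * z w) u + (\<lambda>w. c * z w) + u = 0"
      using no_inverse[OF g] unfolding yg by blast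
    have "pmul tgt (\<lambda>w. c * z w) u + (\<lambda>w. c * z w) + u \<noteq> 0"
    proof (rule not_quasi_regular_with_constant_term_minus_one[OF _ _ u])
      show "(\<lambda>w. c * z w) \<in> path_space src tgt s s"
        by (rule path_space_scale[OF z(1)])
      show "c * z (s, []) = -1"
        using False by (simp add: c_def)
    qed
    with eq show False
      by blast
  qed
qed

lemma path_gradical_eq_zero:
  assumes "path_space src tgt t s \<noteq> ({0} :: (_ \<Rightarrow> 'k::field) set)"
  shows "gradical r (pmul tgt) (path_space src tgt s t) (path_space src tgt t s)
    = ({0} :: (_ \<Rightarrow> 'k) set)"
proof -
  obtain p where p: "is_path src tgt t s p"
    using assms unfolding path_space_eq_zero_iff by blast
  let ?M = "path_space src tgt s t :: (_ \<Rightarrow> 'k) set" and ?G = "path_space src tgt t s"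
  have M: "gideal (pmul tgt) ?M ?G ?M" and zero: "gideal (pmul tgt) ?M ?G {0}"
    by (rule path_space_gideal path_space_gideal_zero)+
  note basis = path_basis_in_path_space[OF p] path_space_gno_zero_divisors[OF p]
  show ?thesis
  proof (cases r)
    case Baer
    then show ?thesis
      using baer_radical_eq_zero[OF zero basis] by simp
  next
    case Nil
    then show ?thesis
      using nil_radical_eq_zero[OF M zero basis] by simp
  next
    case Levitzki
    then show ?thesis
      using levitzki_radical_eq_zero[OF M zero basis] by simp
  next
    case Jacobson
    have "I \<subseteq> {0}" if "gideal (pmul tgt) ?M ?G I" "\<forall>y\<in>I. grqr (pmul tgt) ?M ?G y" for I
    proof -
      have "I \<subseteq> ?M"
        using that(1) by (simp add: gideal_def)
      with that(2) show ?thesis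
        using path_space_not_grqr[OF p] by blast
    qed
    then show ?thesis
      using Jacobson ideal_sum_eq_zero[OF zero] by (simp add: jacobson_radical_def)
  qed
qed

lemma path_gradical_eq_carrier:
  assumes "path_space src tgt t s = ({0} :: (_ \<Rightarrow> 'k::field) set)"
  shows "gradical r (pmul tgt) (path_space src tgt s t) (path_space src tgt t s)
    = (path_space src tgt s t :: (_ \<Rightarrow> 'k) set)"
  by (rule gradical_eq_carrier_if_products_vanish[OF path_space_gideal]) (use assms in simp_all)

theorem lemma3p1:
  fixes src tgt :: "'e \<Rightarrow> 'v" and s t :: 'v and r :: radkind
  assumes "path_space src tgt s t \<noteq> ({0} :: ('v \<times> 'e list \<Rightarrow> 'k::field) set)"
  shows "(gradical r (pmul tgt) (path_space src tgt s t) (path_space src tgt t s)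
            = ({0} :: ('v \<times> 'e list \<Rightarrow> 'k) set)
          \<longleftrightarrow> path_space src tgt t s \<noteq> ({0} :: ('v \<times> 'e list \<Rightarrow> 'k) set))
       \<and> (gradical r (pmul tgt) (path_space src tgt s t) (path_space src tgt t s)
            = (path_space src tgt s t :: ('v \<times> 'e list \<Rightarrow> 'k) set)
          \<longleftrightarrow> path_space src tgt t s = ({0} :: ('v \<times> 'e list \<Rightarrow> 'k) set))"
proof (cases "path_space src tgt t s = ({0} :: ('v \<times> 'e list \<Rightarrow> 'k) set)")
  case True
  then show ?thesis
    using path_gradical_eq_carrier[OF True, of r] assms by simp
next
  case False
  then show ?thesis
    using path_gradical_eq_zero[OF False, of r] assms by simp
qed

end
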